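(* Let $\theta>0$, $\lambda>0$, $\mu>0$, $e>0$ with $\lambda<\mu+1$. Define the private optimal deployment $$\alpha^*(\theta)=\begin{cases}\mu+\theta(1-\lambda), & \lambda\theta\le 1,\\ \theta+\mu+1-2\sqrt{\lambda\theta}, & \lambda\theta>1,\end{cases}$$ the first-best deployment $$\alpha^{**}_{FB}(\theta)=\max\!\left\{0,\begin{cases}\mu+\theta(1-(1+e)\lambda), & (1+e)\lambda\theta\le 1,\\ \theta+\mu+1-2\sqrt{(1+e)\lambda\theta}, & (1+e)\lambda\theta>1,\end{cases}\right\}$$ and the second-best deployment $$\alpha^{**}_{SB}(\theta)=\max\!\left\{0,\begin{cases}\mu+\theta(1-(1+e)\lambda), & \lambda\theta\le 1,\\ \theta+\mu+1-(2+e)\sqrt{\lambda\theta}, & \lambda\theta>1.\end{cases}\right\}$$ Then: 1. $\alpha^{**}_{SB}(\theta)\le\alpha^{**}_{FB}(\theta)\le\alpha^*(\theta)$ for all $\theta>0$. 2. (First-best paradox conditions.) In the regime $(1+e)\lambda\theta\le1$, the derivative with respect to $\theta$ of $\mu+\theta(1-(1+e)\lambda)$ is negative iff $(1+e)\lambda>1$; in the regime $(1+e)\lambda\theta>1$, the derivative with respect to $\theta$ of $\theta+\mu+1-2\sqrt{(1+e)\lambda\theta}$ is negative iff $\theta<(1+e)\lambda$. Hence the first-best paradox region is weakly wider than the private one (private conditions: $\lambda>1$ in the regime $\lambda\theta\le1$, and $\theta<\lambda$ in the regime $\lambda\theta>1$). 3. (Second-best paradox conditions.) In the regime $\lambda\theta\le1$,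 the derivative with respect to $\theta$ of $\mu+\theta(1-(1+e)\lambda)$ is negative iff $(1+e)\lambda>1$; in the regime $\lambda\theta>1$, the derivative with respect to $\theta$ of $\theta+\mu+1-(2+e)\sqrt{\lambda\theta}$ is negative iff $\theta<\left(\frac{2+e}{2}\right)^2\lambda$. Hence the second-best paradox region is weakly wider than the private one. 4. There exist parameter values for which $\alpha^*$ is increasing in $\theta$ (outside the private paradox region) while the corresponding social deployment expression is decreasing in $\theta$ (inside the social paradox region).
   Context: $\theta$ is AI capability, $\lambda$ breach-loss magnitude, $\mu$ organizational readiness, $e$ breach externality parameter. The "paradox region" is the set of parameters where optimal deployment (private, first-best, or second-best as indicated) is decreasing in $\theta$. These deployment formulas arise from a firm with profit $(\theta+\mu)\alpha-\alpha^2/2-\frac{\alpha}{\alpha+d}\lambda\alpha\theta-d$; first-best maximizes this minus $e\frac{\alpha}{\alpha+d}\lambda\alpha\theta$ jointly over $(\alpha,d)$, second-best maximizes it over $\alpha$ with $d$ set at the firm's private optimum. *)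

theory Defs
  imports "HOL-Analysis.Analysis"
begin

text \<open>Parameters: th = AI capability theta, lam = breach-loss magnitude lambda,
  mu = organizational readiness, e = breach externality parameter.\<close>

definition alpha_priv :: "real \<Rightarrow> real \<Rightarrow> real \<Rightarrow> real" where
  "alpha_priv th lam mu =
     (if lam * th \<le> 1 then mu + th * (1 - lam)
      else th + mu + 1 - 2 * sqrt (lam * th))"

definition alpha_FB :: "real \<Rightarrow> real \<Rightarrow> real \<Rightarrow> real \<Rightarrow> real" where
  "alpha_FB th lam mu e = max 0
     (if (1 + e) * lam * th \<le> 1 then mu + th * (1 - (1 + e) * lam)
      else th + mu + 1 - 2 * sqrt ((1 + e) * lam * th))"

definition alpha_SB :: "real \<Rightarrow> real \<Rightarrow> real \<Rightarrow> real \<Rightarrow> real" where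
  "alpha_SB th lam mu e = max 0
     (if lam * th \<le> 1 then mu + th * (1 - (1 + e) * lam)
      else th + mu + 1 - (2 + e) * sqrt (lam * th))"

definition priv_slope :: "real \<Rightarrow> real \<Rightarrow> real \<Rightarrow> real" where
  "priv_slope th lam mu =
     (if lam * th \<le> 1 then deriv (\<lambda>t. mu + t * (1 - lam)) th
      else deriv (\<lambda>t. t + mu + 1 - 2 * sqrt (lam * t)) th)"

definition FB_slope :: "real \<Rightarrow> real \<Rightarrow> real \<Rightarrow> real \<Rightarrow> real" where
  "FB_slope th lam mu e =
     (if (1 + e) * lam * th \<le> 1 then deriv (\<lambda>t. mu + t * (1 - (1 + e) * lam)) th
      else deriv (\<lambda>t. t + mu + 1 - 2 * sqrt ((1 + e) * lam * t)) th)"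

definition SB_slope :: "real \<Rightarrow> real \<Rightarrow> real \<Rightarrow> real \<Rightarrow> real" where
  "SB_slope th lam mu e =
     (if lam * th \<le> 1 then deriv (\<lambda>t. mu + t * (1 - (1 + e) * lam)) th
      else deriv (\<lambda>t. t + mu + 1 - (2 + e) * sqrt (lam * t)) th)"

definition priv_paradox :: "real \<Rightarrow> real \<Rightarrow> real \<Rightarrow> bool" where
  "priv_paradox th lam mu \<longleftrightarrow> priv_slope th lam mu < 0"

definition FB_paradox :: "real \<Rightarrow> real \<Rightarrow> real \<Rightarrow> real \<Rightarrow> bool" where
  "FB_paradox th lam mu e \<longleftrightarrow> FB_slope th lam mu e < 0"

definition SB_paradox :: "real \<Rightarrow> real \<Rightarrow> real \<Rightarrow> real \<Rightarrow> bool" where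
  "SB_paradox th lam mu e \<longleftrightarrow> SB_slope th lam mu e < 0"

end

theory Submission
  imports Defs
begin

text \<open>Each deployment has the form \<open>\<theta> + \<mu> - P(x)\<close>, where \<open>x\<close> is the exposure
  (\<open>\<lambda>\<theta>\<close> privately, \<open>(1 + e)\<lambda>\<theta>\<close> at the first best) and \<open>P\<close> its cost after optimal
  defence: \<open>P x = x\<close> while defence does not pay, \<open>P x = 2\<surd>x - 1\<close> once it does (\<open>x > 1\<close>).
  As \<open>P\<close> is monotone, the first best lies below the private optimum; as \<open>P x \<le> x\<close> and
  \<open>2\<surd>(1 + e) \<le> 2 + e\<close>, the second best, with defence frozen at its private level, lies below
  the first best. The slopes are \<open>1 - k\<close> and \<open>1 - (C/2)\<surd>(k/\<theta>)\<close>, and the externality only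
  raises \<open>k\<close> or \<open>C\<close>, so it can only make them negative.\<close>

definition exposure_cost :: "real \<Rightarrow> real" where
  "exposure_cost x = (if x \<le> 1 then x else 2 * sqrt x - 1)"

lemma exposure_cost_le: "0 \<le> x \<Longrightarrow> exposure_cost x \<le> x"
proof -
  assume "0 \<le> x"
  have "0 \<le> (sqrt x - 1)\<^sup>2" by simp
  also have "\<dots> = x - 2 * sqrt x + 1"
    using \<open>0 \<le> x\<close> by (simp add: power2_diff)
  finally show ?thesis by (simp add: exposure_cost_def)
qed

lemma exposure_cost_mono:
  assumes "0 \<le> x" and "x \<le> y"
  shows "exposure_cost x \<le> exposure_cost y"
proof (cases "x \<le> 1")
  case True
  then have "x \<le> 2 * sqrt y - 1" if "1 < y"
    using real_sqrt_ge_one[of y] that by linarith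
  then show ?thesis
    using True assms by (auto simp: exposure_cost_def)
qed (use assms in \<open>auto simp: exposure_cost_def\<close>)

lemma alpha_priv_eq: "alpha_priv th lam mu = th + mu - exposure_cost (lam * th)"
  by (simp add: alpha_priv_def exposure_cost_def algebra_simps)

lemma alpha_FB_eq:
  "alpha_FB th lam mu e = max 0 (th + mu - exposure_cost ((1 + e) * lam * th))"
  by (simp add: alpha_FB_def exposure_cost_def algebra_simps)

lemma alpha_priv_nonneg:
  assumes "th > 0" and "lam > 0" and "mu \<ge> 0" and "lam < mu + 1"
  shows "alpha_priv th lam mu \<ge> 0"
proof (cases "lam * th \<le> 1")
  case True
  have "th * (lam - 1) \<le> mu"
  proof (cases "lam \<le> 1")
    case False
    have "lam * (th * (lam - 1)) \<le> lam - 1"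
      using True False mult_right_mono[OF True, of "lam - 1"] by (simp add: algebra_simps)
    also have "\<dots> \<le> lam * (lam - 1)"
      using False mult_right_mono[of 1 lam "lam - 1"] by simp
    also have "\<dots> \<le> lam * mu"
      using assms by simp
    finally show ?thesis using \<open>lam > 0\<close> by simp
  qed (use assms mult_nonneg_nonpos[of th "lam - 1"] in linarith)
  then show ?thesis
    using True by (simp add: alpha_priv_def algebra_simps)
next
  case False
  have "2 * sqrt (lam * th) \<le> lam + th"
    using arith_geo_mean_sqrt[of lam th] assms by simp
  then show ?thesis
    using False assms by (simp add: alpha_priv_def)
qed

lemma alpha_FB_le_alpha_priv:
  assumes "th > 0" and "lam > 0" and "mu \<ge> 0" and "e \<ge> 0" and "lam < mu + 1"
  shows "alpha_FB th lam mu e \<le> alpha_priv th lam mu"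
proof -
  have "lam * th \<le> (1 + e) * lam * th"
    using assms by (simp add: mult_right_mono)
  then have "exposure_cost (lam * th) \<le> exposure_cost ((1 + e) * lam * th)"
    using assms by (simp add: exposure_cost_mono)
  then show ?thesis
    using alpha_priv_nonneg[OF assms(1-3,5)]
    unfolding alpha_FB_eq by (simp add: alpha_priv_eq)
qed

lemma alpha_SB_le_alpha_FB:
  assumes "th > 0" and "lam > 0" and "e \<ge> 0"
  shows "alpha_SB th lam mu e \<le> alpha_FB th lam mu e"
proof -
  have "(if lam * th \<le> 1 then mu + th * (1 - (1 + e) * lam)
          else th + mu + 1 - (2 + e) * sqrt (lam * th))
        \<le> th + mu - exposure_cost ((1 + e) * lam * th)"
  proof (cases "lam * th \<le> 1")
    case True
    then show ?thesis
      using exposure_cost_le[of "(1 + e) * lam * th"] assms by (simp add: algebra_simps)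
  next
    case False
    have "0 \<le> e * (lam * th)"
      using assms by simp
    then have "1 < (1 + e) * lam * th"
      using False by (simp add: distrib_right mult.assoc)
    have "1 + e \<le> (1 + e / 2)\<^sup>2"
      by (simp add: power2_eq_square field_simps)
    then have "2 * sqrt (1 + e) \<le> 2 + e"
      using assms real_le_lsqrt[of "1 + e / 2" "1 + e"] by simp
    then have "2 * sqrt (1 + e) * sqrt (lam * th) \<le> (2 + e) * sqrt (lam * th)"
      by (rule mult_right_mono) (use assms in simp)
    then show ?thesis
      using False \<open>1 < (1 + e) * lam * th\<close>
      by (simp add: exposure_cost_def real_sqrt_mult mult.assoc)
  qed
  then show ?thesis
    unfolding alpha_SB_def alpha_FB_eq by simp
qed

lemma deriv_affine: "deriv (\<lambda>t. mu + t * a) x = (a :: real)"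
  by (rule DERIV_imp_deriv) (auto intro!: derivative_eq_intros)

lemma deriv_sqrt_deployment:
  fixes k x C mu :: real
  assumes "k > 0" and "x > 0"
  shows "deriv (\<lambda>t. t + mu + 1 - C * sqrt (k * t)) x = 1 - C * k / (2 * sqrt (k * x))"
proof -
  have "((\<lambda>t. t + mu + 1 - C * sqrt (k * t))
          has_real_derivative 1 - C * (inverse (sqrt (k * x)) / 2 * (k * 1))) (at x)"
    using assms by (auto intro!: derivative_eq_intros simp: mult_less_0_iff)
  then show ?thesis
    by (simp add: DERIV_imp_deriv field_simps)
qed

lemma deriv_sqrt_deployment_neg_iff:
  fixes k x C mu :: real
  assumes "k > 0" and "x > 0" and "C > 0"
  shows "deriv (\<lambda>t. t + mu + 1 - C * sqrt (k * t)) x < 0 \<longleftrightarrow> x < (C / 2)\<^sup>2 * k"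
proof -
  have "deriv (\<lambda>t. t + mu + 1 - C * sqrt (k * t)) x < 0 \<longleftrightarrow> sqrt (k * x) < C / 2 * k"
    unfolding deriv_sqrt_deployment[OF assms(1,2)] using assms by (simp add: field_simps)
  also have "\<dots> \<longleftrightarrow> sqrt (k * x) < sqrt ((C / 2 * k)\<^sup>2)"
    using assms by simp
  also have "\<dots> \<longleftrightarrow> k * x < k * ((C / 2)\<^sup>2 * k)"
    by (simp add: power2_eq_square ac_simps)
  finally show ?thesis
    using \<open>k > 0\<close> by simp
qed

lemma priv_paradox_iff:
  assumes "th > 0" and "lam > 0"
  shows "priv_paradox th lam mu \<longleftrightarrow> (if lam * th \<le> 1 then 1 < lam else th < lam)"
  using deriv_sqrt_deployment_neg_iff[of lam th 2 mu] assms
  by (simp add: priv_paradox_def priv_slope_def deriv_affine)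

lemma FB_paradox_iff:
  assumes "th > 0" and "lam > 0" and "e \<ge> 0"
  shows "FB_paradox th lam mu e \<longleftrightarrow>
    (if (1 + e) * lam * th \<le> 1 then 1 < (1 + e) * lam else th < (1 + e) * lam)"
  using deriv_sqrt_deployment_neg_iff[of "(1 + e) * lam" th 2 mu] assms
  by (simp add: FB_paradox_def FB_slope_def deriv_affine)

lemma SB_paradox_iff:
  assumes "th > 0" and "lam > 0" and "e \<ge> 0"
  shows "SB_paradox th lam mu e \<longleftrightarrow>
    (if lam * th \<le> 1 then 1 < (1 + e) * lam else th < ((2 + e) / 2)\<^sup>2 * lam)"
  using deriv_sqrt_deployment_neg_iff[of lam th "2 + e" mu] assms
  by (simp add: SB_paradox_def SB_slope_def deriv_affine)

lemma priv_paradox_imp_FB_paradox: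
  assumes "th > 0" and "lam > 0" and "e \<ge> 0" and "priv_paradox th lam mu"
  shows "FB_paradox th lam mu e"
proof -
  have lam_le: "lam \<le> (1 + e) * lam" and exposure_le: "lam * th \<le> (1 + e) * lam * th"
    using assms by (simp_all add: mult_right_mono)
  show ?thesis
  proof (cases "lam * th \<le> 1")
    case True
    with assms have "1 < lam"
      by (simp add: priv_paradox_iff)
    then have "1 * th < lam * th"
      using assms by (intro mult_strict_right_mono)
    with True have "th < 1"
      by simp
    with \<open>1 < lam\<close> lam_le have "1 < (1 + e) * lam" "th < (1 + e) * lam"
      by linarith+
    with assms show ?thesis
      by (simp add: FB_paradox_iff)
  next
    case False
    with assms have "th < lam"
      by (simp add: priv_paradox_iff)
    with False lam_le exposure_le have "\<not> (1 + e) * lam * th \<le> 1" "th < (1 + e) * lam"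
      by linarith+
    with assms show ?thesis
      by (simp add: FB_paradox_iff)
  qed
qed

lemma priv_paradox_imp_SB_paradox:
  assumes "th > 0" and "lam > 0" and "e \<ge> 0" and "priv_paradox th lam mu"
  shows "SB_paradox th lam mu e"
proof (cases "lam * th \<le> 1")
  case True
  with assms have "1 < lam"
    by (simp add: priv_paradox_iff)
  moreover have "lam \<le> (1 + e) * lam"
    using assms by simp
  ultimately have "1 < (1 + e) * lam"
    by linarith
  with True assms show ?thesis
    by (simp add: SB_paradox_iff)
next
  case False
  with assms have "th < lam"
    by (simp add: priv_paradox_iff)
  moreover have "lam \<le> ((2 + e) / 2)\<^sup>2 * lam"
    using assms by (simp add: power2_eq_square field_simps)
  ultimately have "th < ((2 + e) / 2)\<^sup>2 * lam"
    by linarith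
  with False assms show ?thesis
    by (simp add: SB_paradox_iff)
qed

text \<open>At \<open>\<theta> = \<lambda> = 1/2\<close> all exposures stay below 1; the private slope \<open>1 - \<lambda>\<close> is
  positive while the social one \<open>1 - 3\<lambda>\<close> is negative.\<close>

lemma social_paradox_beyond_private:
  "\<exists>th lam mu e :: real. th > 0 \<and> lam > 0 \<and> mu > 0 \<and> e > 0 \<and> lam < mu + 1 \<and>
     priv_slope th lam mu > 0 \<and> FB_paradox th lam mu e \<and> SB_paradox th lam mu e"
proof (rule exI[of _ "1 / 2"], rule exI[of _ "1 / 2"], rule exI[of _ 1], rule exI[of _ 2], intro conjI)
  show "priv_slope (1 / 2) (1 / 2) 1 > (0 :: real)"
    unfolding priv_slope_def deriv_affine by simp
  show "FB_paradox (1 / 2) (1 / 2) 1 (2 :: real)"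
    by (simp add: FB_paradox_iff)
  show "SB_paradox (1 / 2) (1 / 2) 1 (2 :: real)"
    by (simp add: SB_paradox_iff)
qed simp_all

theorem proposition8:
  fixes th lam mu e :: real
  assumes "th > 0" and "lam > 0" and "mu > 0" and "e > 0" and "lam < mu + 1"
  shows
   "(alpha_SB th lam mu e \<le> alpha_FB th lam mu e \<and> alpha_FB th lam mu e \<le> alpha_priv th lam mu)
    \<and>
    (((1 + e) * lam * th \<le> 1 \<longrightarrow>
        (deriv (\<lambda>t. mu + t * (1 - (1 + e) * lam)) th < 0 \<longleftrightarrow> (1 + e) * lam > 1))
     \<and> ((1 + e) * lam * th > 1 \<longrightarrow>
        (deriv (\<lambda>t. t + mu + 1 - 2 * sqrt ((1 + e) * lam * t)) th < 0 \<longleftrightarrow> th < (1 + e) * lam))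
     \<and> (priv_paradox th lam mu \<longrightarrow> FB_paradox th lam mu e))
    \<and>
    ((lam * th \<le> 1 \<longrightarrow>
        (deriv (\<lambda>t. mu + t * (1 - (1 + e) * lam)) th < 0 \<longleftrightarrow> (1 + e) * lam > 1))
     \<and> (lam * th > 1 \<longrightarrow>
        (deriv (\<lambda>t. t + mu + 1 - (2 + e) * sqrt (lam * t)) th < 0 \<longleftrightarrow> th < ((2 + e) / 2)^2 * lam))
     \<and> (priv_paradox th lam mu \<longrightarrow> SB_paradox th lam mu e))
    \<and>
    (\<exists>th' lam' mu' e' :: real. th' > 0 \<and> lam' > 0 \<and> mu' > 0 \<and> e' > 0 \<and> lam' < mu' + 1 \<and>
        priv_slope th' lam' mu' > 0 \<and>
        FB_paradox th' lam' mu' e' \<and> SB_paradox th' lam' mu' e')"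
proof -
  have "e \<ge> 0" "mu \<ge> 0"
    using assms by simp_all
  then show ?thesis
    using assms alpha_SB_le_alpha_FB alpha_FB_le_alpha_priv
      priv_paradox_imp_FB_paradox priv_paradox_imp_SB_paradox social_paradox_beyond_private
      deriv_sqrt_deployment_neg_iff[of "(1 + e) * lam" th 2 mu]
      deriv_sqrt_deployment_neg_iff[of lam th "2 + e" mu]
    by (simp add: deriv_affine)
qed

end
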